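(* Let $n\geqslant 1$ and $w\in W_n$ with $w\neq e$. Then $|\Delta|^{\mathrm{In}(w)}:=\bigcup_{s\in\mathrm{In}(w)}|\Delta|_s$ is $(n-2)$-connected, where $\mathrm{In}(w)=\{s\in S_n:\ell(ws)<\ell(w)\}$.
   Context: Standing setup: $\Gamma_1$ is an arbitrary finite Coxeter diagram with a preferred vertex $s_1$ (edge $\{s,t\}$ iff $m_{st}\geqslant3$; unlabelled edge means $m_{st}=3$, no edge means $m_{st}=2$). For $n\geqslant 2$, $\Gamma_n$ is obtained from $\Gamma_{n-1}$ by adding one new vertex $s_n$ joined by an unlabelled edge to $s_{n-1}$ and to no other vertex. $\Gamma_0$ is $\Gamma_1$ with $s_1$ deleted; $\Gamma_{-1}$ is $\Gamma_1$ with $s_1$ and all its neighbours deleted. For $n\geqslant -1$, $S_n$ is the vertex set of $\Gamma_n$ and $W_n$ the Coxeter group, with word length $\ell$ with respect to $S_n$. $|\Delta|$ is a topological $n$-simplex with vertices $a_0,\dots,a_n$, with mirrors: for $s\in S_i\setminus S_{i-1}$ ($0\leqslant i\leqslant n$), $|\Delta|_s$ is the facet opposite $a_i$; for $s\in S_{-1}$, $|\Delta|_s=|\Delta|$. A space is $(-1)$-connected iff nonempty. *)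

theory Defs
  imports "HOL-Analysis.Analysis" "HOL-Library.Extended_Nat"
begin

text \<open>A Coxeter diagram on a finite vertex set V is given by its Coxeter matrix
  m :: vertex => vertex => enat (infinity allowed): m s s = 1, symmetric,
  m s t >= 2 for s ~= t. Edge {s,t} iff m s t >= 3.\<close>

definition coxeter_diagram :: "'v set \<Rightarrow> ('v \<Rightarrow> 'v \<Rightarrow> enat) \<Rightarrow> bool" where
  "coxeter_diagram V m \<longleftrightarrow> finite V \<and> (\<forall>s\<in>V. m s s = 1)
     \<and> (\<forall>s\<in>V. \<forall>t\<in>V. m s t = m t s)
     \<and> (\<forall>s\<in>V. \<forall>t\<in>V. s \<noteq> t \<longrightarrow> 2 \<le> m s t)"

definition alt_word :: "'g \<Rightarrow> 'g \<Rightarrow> nat \<Rightarrow> 'g list" where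
  "alt_word s t k = concat (replicate k [s, t])"

definition cox_step :: "'g set \<Rightarrow> ('g \<Rightarrow> 'g \<Rightarrow> enat) \<Rightarrow> 'g list \<Rightarrow> 'g list \<Rightarrow> bool" where
  "cox_step S m u v \<longleftrightarrow>
     (\<exists>x y s. s \<in> S \<and> u = x @ [s, s] @ y \<and> v = x @ y) \<or>
     (\<exists>x y s t k. s \<in> S \<and> t \<in> S \<and> m s t = enat k \<and> u = x @ alt_word s t k @ y \<and> v = x @ y)"

definition cox_rel :: "'g set \<Rightarrow> ('g \<Rightarrow> 'g \<Rightarrow> enat) \<Rightarrow> ('g list \<times> 'g list) set" where
  "cox_rel S m = {(u, v). u \<in> lists S \<and> v \<in> lists S \<and> equivclp (cox_step S m) u v}"

definition cox_group :: "'g set \<Rightarrow> ('g \<Rightarrow> 'g \<Rightarrow> enat) \<Rightarrow> 'g list set set" where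
  "cox_group S m = lists S // cox_rel S m"

definition cox_unit :: "'g set \<Rightarrow> ('g \<Rightarrow> 'g \<Rightarrow> enat) \<Rightarrow> 'g list set" where
  "cox_unit S m = cox_rel S m `` {[]}"

definition cox_rmul :: "'g set \<Rightarrow> ('g \<Rightarrow> 'g \<Rightarrow> enat) \<Rightarrow> 'g list set \<Rightarrow> 'g \<Rightarrow> 'g list set" where
  "cox_rmul S m w s = cox_rel S m `` ((\<lambda>u. u @ [s]) ` w)"

definition cox_length :: "'g list set \<Rightarrow> nat" where
  "cox_length w = (LEAST k. \<exists>u\<in>w. length u = k)"

definition descent_set :: "'g set \<Rightarrow> ('g \<Rightarrow> 'g \<Rightarrow> enat) \<Rightarrow> 'g list set \<Rightarrow> 'g set" where
  "descent_set S m w = {s \<in> S. cox_length (cox_rmul S m w s) < cox_length w}"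

text \<open>Vertices of Gamma_n: Inl a for a vertex a of Gamma_1 (s_1 = Inl v1),
  and Inr i for the new vertex s_i, 2 <= i <= n.\<close>

definition Sn :: "'v set \<Rightarrow> nat \<Rightarrow> ('v + nat) set" where
  "Sn V n = Inl ` V \<union> Inr ` {2..n}"

definition gamma_m :: "('v \<Rightarrow> 'v \<Rightarrow> enat) \<Rightarrow> 'v \<Rightarrow> ('v + nat) \<Rightarrow> ('v + nat) \<Rightarrow> enat" where
  "gamma_m m v1 x y =
     (case (x, y) of
        (Inl a, Inl b) \<Rightarrow> m a b
      | (Inr i, Inr j) \<Rightarrow> (if i = j then 1 else if i = Suc j \<or> j = Suc i then 3 else 2)
      | (Inl a, Inr j) \<Rightarrow> (if a = v1 \<and> j = 2 then 3 else 2)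
      | (Inr i, Inl b) \<Rightarrow> (if b = v1 \<and> i = 2 then 3 else 2))"

definition Sminus1 :: "'v set \<Rightarrow> ('v \<Rightarrow> 'v \<Rightarrow> enat) \<Rightarrow> 'v \<Rightarrow> ('v + nat) set" where
  "Sminus1 V m v1 = Inl ` {a \<in> V. a \<noteq> v1 \<and> \<not> (3 \<le> m v1 a)}"

text \<open>For s in S_i - S_{i-1} (0 <= i), the index i.\<close>
definition vtx_index :: "'v \<Rightarrow> ('v + nat) \<Rightarrow> nat" where
  "vtx_index v1 x = (case x of Inl a \<Rightarrow> (if a = v1 then 1 else 0) | Inr i \<Rightarrow> i)"

definition std_simplex :: "nat \<Rightarrow> (nat \<Rightarrow> real) set" where
  "std_simplex n = {x. (\<forall>i. 0 \<le> x i \<and> x i \<le> 1) \<and> (\<forall>i>n. x i = 0) \<and> (\<Sum>i\<le>n. x i) = 1}"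

definition mirror :: "'v set \<Rightarrow> ('v \<Rightarrow> 'v \<Rightarrow> enat) \<Rightarrow> 'v \<Rightarrow> nat \<Rightarrow> ('v + nat) \<Rightarrow> (nat \<Rightarrow> real) set" where
  "mirror V m v1 n s = (if s \<in> Sminus1 V m v1 then std_simplex n
                        else {x \<in> std_simplex n. x (vtx_index v1 s) = 0})"

definition k_connected :: "int \<Rightarrow> 'a topology \<Rightarrow> bool" where
  "k_connected k X \<longleftrightarrow> topspace X \<noteq> {} \<and>
     (\<forall>i::nat. int i \<le> k \<longrightarrow>
        (\<forall>f. continuous_map (nsphere i) X f \<longrightarrow>
           (\<exists>c\<in>topspace X. homotopic_with (\<lambda>_. True) (nsphere i) X f (\<lambda>_. c))))"

end

(*
  A non-identity element has a descent, so the union X of the mirrors of its descents is nonempty.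
  If a descent lies in S_{-1}, X is the whole simplex; if the facet opposite some vertex a_j does
  not occur, X is star-shaped about a_j.  Otherwise X is the boundary of the n-simplex, an
  (n-1)-sphere.  A map f from the i-sphere into it, i <= n - 2, is homotopic, by radially projecting
  a straight-line homotopy, to a Lipschitz map g.  Counting grid points shows that a Lipschitz
  image of the i-sphere misses some point q of the boundary, and radially projecting the
  straight-line homotopy from g to -q then contracts f.
*)

theory Submission
  imports Defs
begin

section \<open>Descents in Coxeter groups\<close>

lemma equiv_cox_rel: "equiv (lists S) (cox_rel S m)"
proof (rule equivI)
  show "refl_on (lists S) (cox_rel S m)"
    by (rule refl_onI) (auto simp: cox_rel_def)
  show "sym (cox_rel S m)"
    by (rule symI) (auto simp: cox_rel_def intro: equivclp_sym)
  show "trans (cox_rel S m)"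
    by (rule transI) (auto simp: cox_rel_def intro: equivclp_trans)
  show "cox_rel S m \<subseteq> lists S \<times> lists S"
    by (auto simp: cox_rel_def)
qed

lemma cox_class_eq_unit:
  assumes "w \<in> cox_group S m" and "[] \<in> w"
  shows "w = cox_unit S m"
  using assms equiv_cox_rel unfolding cox_group_def cox_unit_def
  by (metis equiv_class_eq quotientE Image_singleton_iff)

lemma cox_length_attained:
  assumes "w \<in> cox_group S m"
  obtains u where "u \<in> w" and "length u = cox_length w"
proof -
  have "w \<noteq> {}"
    using assms equiv_cox_rel unfolding cox_group_def by (metis in_quotient_imp_non_empty)
  then obtain u0 where "u0 \<in> w" by blast
  then have "\<exists>k. \<exists>u\<in>w. length u = k" by blast
  then have "\<exists>u\<in>w. length u = cox_length w"
    unfolding cox_length_def by (rule LeastI_ex)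
  with that show thesis by blast
qed

lemma cox_rmul_drop_last:
  assumes "u @ [s] \<in> w" and "s \<in> S" and "u \<in> lists S"
  shows "u \<in> cox_rmul S m w s"
proof -
  have "cox_step S m (u @ [s, s]) u"
    using \<open>s \<in> S\<close> unfolding cox_step_def by (metis append_Nil2)
  then have "(u @ [s] @ [s], u) \<in> cox_rel S m"
    using assms unfolding cox_rel_def by auto
  then show ?thesis
    using assms(1) unfolding cox_rmul_def by (force intro: ImageI)
qed

lemma descent_set_nonempty:
  assumes "w \<in> cox_group S m" and "w \<noteq> cox_unit S m"
  shows "descent_set S m w \<noteq> {}"
proof -
  obtain u where uw: "u \<in> w" and len: "length u = cox_length w"
    using cox_length_attained[OF assms(1)] .
  have "u \<noteq> []" using cox_class_eq_unit[OF assms(1)] uw assms(2) by auto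
  then obtain u' s where u: "u = u' @ [s]" by (cases u rule: rev_cases) auto
  have "w \<subseteq> lists S"
    using in_quotient_imp_subset[OF equiv_cox_rel] assms(1) unfolding cox_group_def by blast
  then have "s \<in> S" and "u' \<in> lists S" using uw u by auto
  then have "u' \<in> cox_rmul S m w s" using uw u by (intro cox_rmul_drop_last) simp_all
  then have "cox_length (cox_rmul S m w s) \<le> length u'"
    unfolding cox_length_def by (intro Least_le) blast
  also have "\<dots> < cox_length w" using len u by simp
  finally have "s \<in> descent_set S m w" using \<open>s \<in> S\<close> unfolding descent_set_def by simp
  then show ?thesis by blast
qed

section \<open>Star-shaped unions of facets\<close>

definition simplex_vertex :: "nat \<Rightarrow> nat \<Rightarrow> real" where
  "simplex_vertex j = (\<lambda>k. if k = j then 1 else 0)"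

definition facet_union :: "nat \<Rightarrow> nat set \<Rightarrow> (nat \<Rightarrow> real) set" where
  "facet_union n J = {x \<in> std_simplex n. \<exists>j\<in>J. x j = 0}"

abbreviation simplex_boundary :: "nat \<Rightarrow> (nat \<Rightarrow> real) set" where
  "simplex_boundary n \<equiv> facet_union n {..n}"

lemma simplex_vertex_in_std_simplex: "j \<le> n \<Longrightarrow> simplex_vertex j \<in> std_simplex n"
  by (auto simp: std_simplex_def simplex_vertex_def)

lemma std_simplex_segment:
  assumes "x \<in> std_simplex n" "c \<in> std_simplex n" "0 \<le> t" "t \<le> 1"
  shows "(\<lambda>k. (1 - t) * x k + t * c k) \<in> std_simplex n"
proof -
  have x: "\<forall>i. 0 \<le> x i \<and> x i \<le> 1" "\<forall>i>n. x i = 0" "(\<Sum>i\<le>n. x i) = 1"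
    and c: "\<forall>i. 0 \<le> c i \<and> c i \<le> 1" "\<forall>i>n. c i = 0" "(\<Sum>i\<le>n. c i) = 1"
    using assms(1,2) by (auto simp: std_simplex_def)
  have "(\<Sum>i\<le>n. (1 - t) * x i + t * c i) = (1 - t) * (\<Sum>i\<le>n. x i) + t * (\<Sum>i\<le>n. c i)"
    by (simp add: sum.distrib sum_distrib_left)
  then have sum: "(\<Sum>i\<le>n. (1 - t) * x i + t * c i) = 1" using x c by simp
  have "(1 - t) * x i + t * c i \<le> (1 - t) * 1 + t * 1" for i
    using x c assms by (intro add_mono mult_left_mono) auto
  then show ?thesis using sum x c assms unfolding std_simplex_def by auto
qed

lemma facet_union_star:
  assumes "j0 \<le> n" "j0 \<notin> J" "x \<in> facet_union n J" "0 \<le> t" "t \<le> 1"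
  shows "(\<lambda>k. (1 - t) * x k + t * simplex_vertex j0 k) \<in> facet_union n J"
  using assms std_simplex_segment[OF _ simplex_vertex_in_std_simplex[OF assms(1)]]
  unfolding facet_union_def simplex_vertex_def by fastforce

definition straight_homotopy ::
    "('a \<Rightarrow> nat \<Rightarrow> real) \<Rightarrow> ('a \<Rightarrow> nat \<Rightarrow> real) \<Rightarrow> real \<times> 'a \<Rightarrow> nat \<Rightarrow> real" where
  "straight_homotopy f g p = (\<lambda>k. (1 - fst p) * f (snd p) k + fst p * g (snd p) k)"

lemma continuous_map_straight_homotopy:
  assumes "\<And>k. continuous_map Y euclideanreal (\<lambda>y. f y k)"
    and "\<And>k. continuous_map Y euclideanreal (\<lambda>y. g y k)"
  shows "continuous_map (prod_topology (top_of_set {0..1}) Y) euclideanreal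
           (\<lambda>p. straight_homotopy f g p k)"
proof -
  have t: "continuous_map (prod_topology (top_of_set {0..1::real}) Y) euclideanreal fst"
    by (metis continuous_map_fst continuous_map_from_subtopology continuous_map_id
        continuous_map_compose id_comp)
  have s: "continuous_map (prod_topology (top_of_set {0..1::real}) Y) euclideanreal (\<lambda>p. h (snd p))"
    if "continuous_map Y euclideanreal h" for h
    using continuous_map_compose[OF continuous_map_snd that] by (simp add: o_def)
  show ?thesis
    unfolding straight_homotopy_def by (intro continuous_intros t s assms)
qed

lemma homotopic_with_straight:
  fixes X :: "(nat \<Rightarrow> real) set"
  assumes f: "continuous_map Y (subtopology (powertop_real UNIV) X) f"
    and g: "continuous_map Y (subtopology (powertop_real UNIV) X) g"
    and seg: "\<And>y t. y \<in> topspace Y \<Longrightarrow> 0 \<le> t \<Longrightarrow> t \<le> 1 \<Longrightarrow>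
                 (\<lambda>k. (1 - t) * f y k + t * g y k) \<in> X"
  shows "homotopic_with (\<lambda>_. True) Y (subtopology (powertop_real UNIV) X) f g"
  unfolding homotopic_with_def
proof (intro exI conjI allI ballI)
  have "continuous_map (prod_topology (top_of_set {0..1}) Y) euclideanreal
          (\<lambda>p. straight_homotopy f g p k)" for k
    using f g by (intro continuous_map_straight_homotopy)
      (auto simp: continuous_map_in_subtopology continuous_map_componentwise_UNIV)
  moreover have "straight_homotopy f g p \<in> X"
    if "p \<in> topspace (prod_topology (top_of_set {0..1}) Y)" for p
    using that seg by (auto simp: straight_homotopy_def)
  ultimately show "continuous_map (prod_topology (top_of_set {0..1}) Y) (subtopology (powertop_real UNIV) X)
          (straight_homotopy f g)"
    by (auto simp: continuous_map_in_subtopology continuous_map_componentwise_UNIV)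
qed (auto simp: straight_homotopy_def)

lemma k_connected_star_shaped:
  fixes X :: "(nat \<Rightarrow> real) set"
  assumes c: "c \<in> X"
    and star: "\<And>x t. x \<in> X \<Longrightarrow> 0 \<le> t \<Longrightarrow> t \<le> 1 \<Longrightarrow> (\<lambda>k. (1 - t) * x k + t * c k) \<in> X"
  shows "k_connected k (subtopology (powertop_real UNIV) X)"
  unfolding k_connected_def
proof (intro conjI allI impI)
  fix i :: nat and f
  assume f: "continuous_map (nsphere i) (subtopology (powertop_real UNIV) X) f"
  then have "homotopic_with (\<lambda>_. True) (nsphere i) (subtopology (powertop_real UNIV) X) f (\<lambda>_. c)"
    using c by (intro homotopic_with_straight star)
      (auto simp: continuous_map_in_subtopology continuous_map_def)
  then show "\<exists>c\<in>topspace (subtopology (powertop_real UNIV) X).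
               homotopic_with (\<lambda>_. True) (nsphere i) (subtopology (powertop_real UNIV) X) f (\<lambda>_. c)"
    using c by auto
qed (use c in auto)

section \<open>Radial projection onto the boundary of the simplex\<close>

definition coord_min :: "nat \<Rightarrow> (nat \<Rightarrow> real) \<Rightarrow> real" where
  "coord_min n y = Min (y ` {..n})"

definition coord_spread :: "nat \<Rightarrow> (nat \<Rightarrow> real) \<Rightarrow> real" where
  "coord_spread n y = (\<Sum>k\<le>n. y k - coord_min n y)"

text \<open>Radial projection from the barycentre onto the boundary, extended to all \<open>y\<close> so as to be
  invariant under \<open>y \<mapsto> c + \<lambda> y\<close> for \<open>\<lambda> > 0\<close>; it is meaningful only when the coordinates
  \<open>y 0, \<dots>, y n\<close> are not all equal.\<close>

definition boundary_proj :: "nat \<Rightarrow> (nat \<Rightarrow> real) \<Rightarrow> nat \<Rightarrow> real" where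
  "boundary_proj n y = (\<lambda>j. if j \<le> n then (y j - coord_min n y) / coord_spread n y else 0)"

lemma coord_min_le: "k \<le> n \<Longrightarrow> coord_min n y \<le> y k"
  by (simp add: coord_min_def)

lemma coord_min_attained: "\<exists>k\<le>n. coord_min n y = y k"
proof -
  have "Min (y ` {..n}) \<in> y ` {..n}" by (rule Min_in) auto
  then show ?thesis unfolding coord_min_def by (metis atMost_iff imageE)
qed

lemma coord_min_eqI:
  assumes "\<And>k. k \<le> n \<Longrightarrow> c \<le> y k" and "k0 \<le> n" and "y k0 = c"
  shows "coord_min n y = c"
  using coord_min_le[OF assms(2), of y] coord_min_attained[of n y] assms by force

lemma coord_min_Suc: "coord_min (Suc n) y = min (coord_min n y) (y (Suc n))"
  by (simp add: coord_min_def atMost_Suc min.commute)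

lemma coord_min_diff_le:
  assumes "\<And>k. k \<le> n \<Longrightarrow> \<bar>y k - z k\<bar> \<le> \<tau>"
  shows "\<bar>coord_min n y - coord_min n z\<bar> \<le> \<tau>"
  using assms
proof (induction n)
  case 0
  then show ?case by (simp add: coord_min_def)
next
  case (Suc n)
  have "\<bar>coord_min n y - coord_min n z\<bar> \<le> \<tau>" and "\<bar>y (Suc n) - z (Suc n)\<bar> \<le> \<tau>"
    using Suc by simp_all
  then show ?case by (simp add: coord_min_Suc min_def abs_le_iff)
qed

lemma continuous_map_coord_min:
  assumes "\<And>k. continuous_map X euclideanreal (\<lambda>p. z p k)"
  shows "continuous_map X euclideanreal (\<lambda>p. coord_min n (z p))"
  by (induction n) (auto simp: coord_min_Suc intro: continuous_map_real_min assms,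
      simp add: coord_min_def assms)

lemma coord_spread_nonneg: "0 \<le> coord_spread n y"
  unfolding coord_spread_def by (intro sum_nonneg) (simp add: coord_min_le)

lemma coord_spread_eq_0D:
  assumes "coord_spread n y = 0" and "k \<le> n"
  shows "y k = coord_min n y"
proof -
  have "\<forall>k\<in>{..n}. y k - coord_min n y = 0"
    using assms(1) unfolding coord_spread_def
    by (subst sum_nonneg_eq_0_iff[symmetric]) (auto simp: coord_min_le)
  then show ?thesis using assms(2) by auto
qed

lemma coord_diff_le_spread: "k \<le> n \<Longrightarrow> y k - coord_min n y \<le> coord_spread n y"
  unfolding coord_spread_def by (intro member_le_sum) (auto simp: coord_min_le)

lemma boundary_proj_in_boundary:
  assumes "0 < coord_spread n y"
  shows "boundary_proj n y \<in> simplex_boundary n"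
proof -
  have "0 \<le> boundary_proj n y j \<and> boundary_proj n y j \<le> 1" for j
    using assms coord_diff_le_spread[of j n y] coord_min_le[of j n y]
    by (auto simp: boundary_proj_def)
  moreover have "(\<Sum>j\<le>n. boundary_proj n y j) = 1"
    using assms by (simp add: boundary_proj_def coord_spread_def sum_divide_distrib[symmetric])
  moreover obtain k where "k \<le> n" "coord_min n y = y k" using coord_min_attained by blast
  ultimately show ?thesis
    unfolding facet_union_def std_simplex_def by (auto simp: boundary_proj_def)
qed

lemma boundary_proj_affine:
  assumes q: "q \<in> simplex_boundary n" and "0 < r" and y: "\<And>k. k \<le> n \<Longrightarrow> y k = c + r * q k"
  shows "boundary_proj n y = q"
proof
  fix j
  have q0: "\<forall>i. 0 \<le> q i" "\<forall>i>n. q i = 0" "(\<Sum>k\<le>n. q k) = 1"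
    using q by (auto simp: facet_union_def std_simplex_def)
  obtain k0 where "k0 \<le> n" "q k0 = 0" using q by (auto simp: facet_union_def)
  then have min: "coord_min n y = c"
    using y q0(1) \<open>0 < r\<close> by (intro coord_min_eqI[of n c y k0]) auto
  have "coord_spread n y = (\<Sum>k\<le>n. r * q k)"
    unfolding coord_spread_def min using y by (intro sum.cong) simp_all
  also have "\<dots> = r" using q0(3) by (simp add: sum_distrib_left[symmetric])
  finally show "boundary_proj n y j = q j"
    using min y \<open>0 < r\<close> q0(2) by (auto simp: boundary_proj_def)
qed

lemma boundary_proj_fixes_boundary:
  assumes "x \<in> simplex_boundary n"
  shows "boundary_proj n x = x"
proof -
  have "x = (\<lambda>k. 0 + 1 * x k)" by simp
  then show ?thesis using boundary_proj_affine[OF assms, of 1 x 0] by simp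
qed

lemma homotopic_boundary_proj_straight:
  assumes f: "\<And>k. continuous_map Y euclideanreal (\<lambda>y. f y k)"
    and g: "\<And>k. continuous_map Y euclideanreal (\<lambda>y. g y k)"
    and pos: "\<And>y t. y \<in> topspace Y \<Longrightarrow> 0 \<le> t \<Longrightarrow> t \<le> 1 \<Longrightarrow>
                0 < coord_spread n (\<lambda>k. (1 - t) * f y k + t * g y k)"
  shows "homotopic_with (\<lambda>_. True) Y (subtopology (powertop_real UNIV) (simplex_boundary n))
           (\<lambda>y. boundary_proj n (f y)) (\<lambda>y. boundary_proj n (g y))"
  unfolding homotopic_with_def
proof (intro exI conjI allI ballI)
  let ?h = "straight_homotopy f g"
  let ?I = "prod_topology (top_of_set {0..1}) Y"
  have h: "continuous_map ?I euclideanreal (\<lambda>p. ?h p k)" for k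
    by (rule continuous_map_straight_homotopy[OF f g])
  have sp: "0 < coord_spread n (?h p)" if "p \<in> topspace ?I" for p
    using that pos by (auto simp: straight_homotopy_def)
  have "continuous_map ?I euclideanreal (\<lambda>p. boundary_proj n (?h p) j)" for j
  proof (cases "j \<le> n")
    case True
    have "continuous_map ?I euclideanreal
            (\<lambda>p. (?h p j - coord_min n (?h p)) / (\<Sum>k\<le>n. ?h p k - coord_min n (?h p)))"
      using sp unfolding coord_spread_def
      by (intro continuous_map_real_divide continuous_map_diff continuous_map_sum h
          continuous_map_coord_min) force+
    then show ?thesis using True by (simp add: boundary_proj_def coord_spread_def)
  qed (simp add: boundary_proj_def)
  then show "continuous_map ?I (subtopology (powertop_real UNIV) (simplex_boundary n))
               (\<lambda>p. boundary_proj n (?h p))"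
    using sp boundary_proj_in_boundary
    by (auto simp: continuous_map_in_subtopology continuous_map_componentwise_UNIV)
qed (auto simp: straight_homotopy_def)

lemma boundary_proj_diff_le:
  assumes yz: "\<And>k. k \<le> n \<Longrightarrow> \<bar>y k - z k\<bar> \<le> \<tau>"
    and "\<kappa> \<le> coord_spread n y" and "\<kappa> \<le> coord_spread n z" and "0 < \<kappa>"
  shows "\<bar>boundary_proj n y j - boundary_proj n z j\<bar> \<le> (2 * real n + 4) * \<tau> / \<kappa>"
proof (cases "j \<le> n")
  case False
  have "0 \<le> \<tau>" using yz[of 0] by linarith
  then show ?thesis using False \<open>0 < \<kappa>\<close> by (simp add: boundary_proj_def)
next
  case True
  define A B a b where "A = coord_spread n y" and "B = coord_spread n z"
    and "a = y j - coord_min n y" and "b = z j - coord_min n z"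
  have A: "\<kappa> \<le> A" and B: "\<kappa> \<le> B" using assms(2,3) A_def B_def by simp_all
  have mins: "\<bar>coord_min n y - coord_min n z\<bar> \<le> \<tau>" using yz by (rule coord_min_diff_le)
  have ab: "\<bar>a - b\<bar> \<le> 2 * \<tau>" using yz[OF True] mins unfolding a_def b_def by linarith
  then have "0 \<le> \<tau>" by linarith
  have "\<bar>B - A\<bar> \<le> (\<Sum>k\<le>n. \<bar>(z k - coord_min n z) - (y k - coord_min n y)\<bar>)"
    unfolding A_def B_def coord_spread_def sum_subtractf[symmetric] by (rule sum_abs)
  also have "\<dots> \<le> (\<Sum>k\<le>n. 2 * \<tau>)"
    using yz mins by (intro sum_mono) (fastforce simp: abs_le_iff)
  finally have BA: "\<bar>B - A\<bar> \<le> 2 * (real n + 1) * \<tau>" by (simp add: algebra_simps)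
  have b: "0 \<le> b / B" "b / B \<le> 1"
    using True B \<open>0 < \<kappa>\<close> coord_min_le[OF True, of z] coord_diff_le_spread[OF True, of z]
    unfolding b_def B_def by simp_all
  have "a / A - b / B = ((a - b) + b / B * (B - A)) / A"
    using A B \<open>0 < \<kappa>\<close> by (simp add: field_simps)
  then have "\<bar>a / A - b / B\<bar> = \<bar>(a - b) + b / B * (B - A)\<bar> / A"
    using A \<open>0 < \<kappa>\<close> by simp
  also have "\<dots> \<le> (2 * \<tau> + 2 * (real n + 1) * \<tau>) / A"
  proof (intro divide_right_mono)
    have "\<bar>b / B * (B - A)\<bar> = b / B * \<bar>B - A\<bar>"
      using b(1) by (simp only: abs_mult abs_of_nonneg)
    also have "\<dots> \<le> \<bar>B - A\<bar>" using b by (intro mult_left_le_one_le) auto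
    also have "\<dots> \<le> 2 * (real n + 1) * \<tau>" by (rule BA)
    finally have "\<bar>b / B * (B - A)\<bar> \<le> 2 * (real n + 1) * \<tau>" .
    with ab have "\<bar>a - b\<bar> + \<bar>b / B * (B - A)\<bar> \<le> 2 * \<tau> + 2 * (real n + 1) * \<tau>"
      by (rule add_mono)
    then show "\<bar>(a - b) + b / B * (B - A)\<bar> \<le> 2 * \<tau> + 2 * (real n + 1) * \<tau>"
      using abs_triangle_ineq order_trans by blast
  qed (use A \<open>0 < \<kappa>\<close> in simp)
  also have "\<dots> \<le> (2 * \<tau> + 2 * (real n + 1) * \<tau>) / \<kappa>"
    using A \<open>0 < \<kappa>\<close> \<open>0 \<le> \<tau>\<close> by (intro divide_left_mono) auto
  also have "\<dots> = (2 * real n + 4) * \<tau> / \<kappa>" by (simp add: algebra_simps)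
  finally show ?thesis
    using True by (simp add: boundary_proj_def a_def b_def A_def B_def)
qed

lemma std_simplex_large_coord:
  assumes "x \<in> std_simplex n"
  obtains j where "j \<le> n" and "1 / real (n + 1) \<le> x j"
proof (rule ccontr)
  assume "\<not> thesis"
  then have "\<forall>j\<in>{..n}. x j < 1 / real (n + 1)" using that by force
  then have "(\<Sum>j\<le>n. x j) < (\<Sum>j\<le>n. 1 / real (n + 1))" by (intro sum_strict_mono) auto
  then show False using assms by (simp add: std_simplex_def)
qed

lemma coord_spread_near_boundary:
  assumes x: "x \<in> simplex_boundary n"
    and z: "\<And>k. k \<le> n \<Longrightarrow> \<bar>z k - x k\<bar> \<le> 1 / (4 * (real n + 1))"
  shows "1 / (2 * (real n + 1)) \<le> coord_spread n z"
proof -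
  obtain j0 where j0: "j0 \<le> n" "x j0 = 0" using x by (auto simp: facet_union_def)
  obtain j1 where j1: "j1 \<le> n" "1 / real (n + 1) \<le> x j1"
    using x by (auto simp: facet_union_def elim: std_simplex_large_coord)
  have "1 / a - 2 * (1 / (4 * a)) = 1 / (2 * a)" if "0 < a" for a :: real
    using that by (simp add: field_simps)
  from this[of "real n + 1"]
  have "1 / real (n + 1) - 2 * (1 / (4 * (real n + 1))) = 1 / (2 * (real n + 1))"
    by (simp add: add.commute)
  then have "1 / (2 * (real n + 1)) \<le> z j1 - z j0"
    using z[OF j0(1)] z[OF j1(1)] j0 j1 unfolding abs_le_iff by linarith
  also have "\<dots> \<le> z j1 - coord_min n z" using j0 coord_min_le by simp
  also have "\<dots> \<le> coord_spread n z" using j1(1) by (rule coord_diff_le_spread)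
  finally show ?thesis .
qed

lemma coord_spread_antipode:
  assumes q: "q \<in> simplex_boundary n"
  shows "0 < coord_spread n (\<lambda>k. - q k)"
proof (rule ccontr)
  assume "\<not> ?thesis"
  then have "coord_spread n (\<lambda>k. - q k) = 0" using coord_spread_nonneg[of n "\<lambda>k. - q k"] by linarith
  then have qc: "q k = - coord_min n (\<lambda>k. - q k)" if "k \<le> n" for k
    using coord_spread_eq_0D[OF _ that] by fastforce
  obtain j where "j \<le> n" "q j = 0" using q by (auto simp: facet_union_def)
  then have "q k = 0" if "k \<le> n" for k using qc[OF that] qc[of j] by simp
  then have "(\<Sum>k\<le>n. q k) = 0" by simp
  then show False using q by (simp add: facet_union_def std_simplex_def)
qed

text \<open>The straight homotopy from \<open>y\<close> to \<open>-q\<close> projects to a homotopy on the boundary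
  as long as the projection of \<open>y\<close> avoids \<open>q\<close>: a degenerate point in between would
  exhibit \<open>y\<close> as a positive affine image of \<open>q\<close>.\<close>

lemma coord_spread_segment_to_antipode:
  assumes q: "q \<in> simplex_boundary n" and y: "0 < coord_spread n y" and yq: "boundary_proj n y \<noteq> q"
    and t: "0 \<le> t" "t \<le> 1"
  shows "0 < coord_spread n (\<lambda>k. (1 - t) * y k + t * - q k)"
proof (rule ccontr)
  let ?z = "\<lambda>k. (1 - t) * y k + t * - q k"
  define c where "c = coord_min n ?z"
  assume "\<not> ?thesis"
  then have "coord_spread n ?z = 0" using coord_spread_nonneg[of n ?z] by linarith
  then have zc: "(1 - t) * y k - t * q k = c" if "k \<le> n" for k
    using coord_spread_eq_0D[OF _ that] unfolding c_def by simp
  consider "t = 0" | "t = 1" | "0 < t \<and> t < 1" using t by linarith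
  then show False
  proof cases
    case 1
    then have "coord_min n y = c" using zc coord_min_eqI[of n c y 0] by simp
    then have "coord_spread n y = 0" using zc 1 by (simp add: coord_spread_def)
    then show False using y by simp
  next
    case 2
    then have "coord_spread n (\<lambda>k. - q k) = coord_spread n ?z" by simp
    then show False using coord_spread_antipode[OF q] \<open>coord_spread n ?z = 0\<close> by simp
  next
    case 3
    have "boundary_proj n y = q"
    proof (rule boundary_proj_affine[OF q])
      show "0 < t / (1 - t)" using 3 by simp
      fix k assume "k \<le> n"
      then have "y k = (c + t * q k) / (1 - t)"
        using zc[of k] 3 by (simp add: eq_divide_eq algebra_simps)
      then show "y k = c / (1 - t) + t / (1 - t) * q k"
        by (simp add: add_divide_distrib)
    qed
    then show False using yq by simp
  qed
qed

section \<open>Lipschitz approximation on spheres\<close>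

definition sphere_carrier :: "nat \<Rightarrow> (nat \<Rightarrow> real) set" where
  "sphere_carrier i = {x. (\<Sum>k\<le>i. x k ^ 2) = 1 \<and> (\<forall>k>i. x k = 0)}"

definition l1_dist :: "nat \<Rightarrow> (nat \<Rightarrow> real) \<Rightarrow> (nat \<Rightarrow> real) \<Rightarrow> real" where
  "l1_dist i x y = (\<Sum>k\<le>i. \<bar>x k - y k\<bar>)"

lemma nsphere_eq_top_of_set: "nsphere i = top_of_set (sphere_carrier i)"
  by (simp add: nsphere sphere_carrier_def euclidean_product_topology)

lemma sphere_carrier_nonempty: "sphere_carrier i \<noteq> {}"
  using in_topspace_nsphere[of i] by (auto simp: nsphere_eq_top_of_set)

lemma sphere_carrier_abs_coord_le_1:
  assumes "x \<in> sphere_carrier i"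
  shows "\<bar>x k\<bar> \<le> 1"
proof (cases "k \<le> i")
  case True
  have "x k ^ 2 \<le> (\<Sum>j\<le>i. x j ^ 2)" using True by (intro member_le_sum) auto
  then show ?thesis using assms by (simp add: sphere_carrier_def abs_square_le_1)
qed (use assms in \<open>simp add: sphere_carrier_def\<close>)

lemma compact_sphere_carrier: "compact (sphere_carrier i)"
proof -
  define K :: "(nat \<Rightarrow> real) set" where "K = PiE UNIV (\<lambda>k. if k \<le> i then {-1..1} else {0})"
  have "compactin (powertop_real UNIV) K"
    unfolding K_def by (subst compactin_PiE) auto
  then have "compact K" by (simp add: euclidean_product_topology)
  moreover have "closed (sphere_carrier i)"
    unfolding sphere_carrier_def
    by (intro closed_Collect_conj closed_Collect_all closed_Collect_imp closed_Collect_eq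
        continuous_intros continuous_on_product_coordinates) auto
  moreover have "sphere_carrier i \<subseteq> K"
    using sphere_carrier_abs_coord_le_1 unfolding K_def
    by (fastforce simp: sphere_carrier_def abs_le_iff)
  ultimately show ?thesis by (metis compact_Int_closed inf.absorb_iff2)
qed

lemma abs_coord_diff_le_l1_dist:
  assumes "x \<in> sphere_carrier i" "y \<in> sphere_carrier i"
  shows "\<bar>x k - y k\<bar> \<le> l1_dist i x y"
proof (cases "k \<le> i")
  case True
  then show ?thesis unfolding l1_dist_def by (intro member_le_sum) auto
qed (use assms in \<open>simp add: sphere_carrier_def l1_dist_def sum_nonneg\<close>)

lemma dist_le_l1_dist:
  assumes x: "x \<in> sphere_carrier i" and y: "y \<in> sphere_carrier i"
  shows "dist x y \<le> 2 * l1_dist i x y"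
proof (rule ccontr)
  assume "\<not> ?thesis"
  then obtain N where N: "(1/2) ^ N < dist x y - 2 * l1_dist i x y"
    using real_arch_pow_inv[of "dist x y - 2 * l1_dist i x y" "1/2"] by auto
  have "Max {dist (x (from_nat n)) (y (from_nat n)) |n. n \<le> N} \<le> l1_dist i x y"
  proof (rule Max.boundedI)
    have "{dist (x (from_nat n)) (y (from_nat n)) |n. n \<le> N}
          = (\<lambda>n. dist (x (from_nat n)) (y (from_nat n))) ` {..N}"
      by auto
    then show "finite {dist (x (from_nat n)) (y (from_nat n)) |n. n \<le> N}" by simp
  qed (use abs_coord_diff_le_l1_dist[OF x y] in \<open>auto simp: dist_real_def\<close>)
  then show False
    using dist_fun_le_dist_first_terms[of x y N] N by linarith
qed

text \<open>McShane's inf-convolution \<open>x \<mapsto> inf\<^sub>y F y + L\<cdot>dist x y\<close> is \<open>L\<close>-Lipschitz, and it is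
  uniformly close to \<open>F\<close> once \<open>1/L\<close> is a modulus of uniform continuity for \<open>F\<close>.\<close>

lemma lipschitz_approximation:
  fixes F :: "'a::metric_space \<Rightarrow> real"
  assumes "S \<noteq> {}" and F01: "\<And>y. y \<in> S \<Longrightarrow> 0 \<le> F y \<and> F y \<le> 1"
    and "0 < \<delta>" and "0 < e"
    and unif: "\<And>x y. x \<in> S \<Longrightarrow> y \<in> S \<Longrightarrow> dist x y < \<delta> \<Longrightarrow> \<bar>F x - F y\<bar> < e"
  obtains G where "\<And>x. x \<in> S \<Longrightarrow> \<bar>G x - F x\<bar> \<le> e" and "(1/\<delta>)-lipschitz_on S G"
proof
  define L where "L = 1/\<delta>"
  define G where "G x = Inf ((\<lambda>y. F y + L * dist x y) ` S)" for x
  have L: "0 \<le> L" using \<open>0 < \<delta>\<close> by (simp add: L_def)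
  have bdd: "bdd_below ((\<lambda>y. F y + L * dist z y) ` S)" for z
    using F01 L by (intro bdd_belowI[of _ 0]) auto
  have G_le: "G z \<le> F y + L * dist z y" if "y \<in> S" for z y
    unfolding G_def using that bdd by (intro cInf_lower) auto
  have G_ge: "c \<le> G z" if "\<And>y. y \<in> S \<Longrightarrow> c \<le> F y + L * dist z y" for c z
    unfolding G_def using \<open>S \<noteq> {}\<close> that by (intro cInf_greatest) auto
  show "\<bar>G x - F x\<bar> \<le> e" if x: "x \<in> S" for x
  proof -
    have "F x - e \<le> F y + L * dist x y" if y: "y \<in> S" for y
    proof (cases "dist x y < \<delta>")
      case True
      have "0 \<le> L * dist x y" using L by simp
      then show ?thesis using unif[OF x y True] by linarith
    next
      case False
      then have "1 \<le> L * dist x y" using \<open>0 < \<delta>\<close> by (simp add: L_def field_simps)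
      then show ?thesis using F01[OF x] F01[OF y] \<open>0 < e\<close> by linarith
    qed
    then have "F x - e \<le> G x" by (rule G_ge)
    moreover have "G x \<le> F x" using G_le[OF x, of x] by simp
    ultimately show ?thesis by linarith
  qed
  have G_diff: "G z - L * dist z z' \<le> G z'" if "z' \<in> S" for z z'
  proof (rule G_ge)
    fix y assume "y \<in> S"
    have "G z \<le> F y + L * dist z y" by (rule G_le[OF \<open>y \<in> S\<close>])
    also have "\<dots> \<le> F y + L * dist z z' + L * dist z' y"
      using mult_left_mono[OF dist_triangle[of z y z'] L] by (simp add: distrib_left)
    finally show "G z - L * dist z z' \<le> F y + L * dist z' y" by linarith
  qed
  show "(1/\<delta>)-lipschitz_on S G"
    unfolding L_def[symmetric]
  proof (rule lipschitz_onI[OF _ L])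
    fix x y assume "x \<in> S" "y \<in> S"
    then have "G x - L * dist x y \<le> G y" and "G y - L * dist x y \<le> G x"
      using G_diff[of y x] G_diff[of x y] by (simp_all add: dist_commute)
    then show "dist (G x) (G y) \<le> L * dist x y" by (simp add: dist_real_def abs_le_iff)
  qed
qed

lemma nsphere_map_lipschitz_approximation:
  assumes f: "continuous_map (nsphere i) (subtopology (powertop_real UNIV) (std_simplex n)) f"
    and "0 < e"
  obtains G K where "\<And>j x. x \<in> sphere_carrier i \<Longrightarrow> \<bar>G j x - f x j\<bar> \<le> e"
    and "\<And>j. continuous_map (nsphere i) euclideanreal (G j)" and "0 \<le> K"
    and "\<And>j x y. j \<le> n \<Longrightarrow> x \<in> sphere_carrier i \<Longrightarrow> y \<in> sphere_carrier i \<Longrightarrow>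
           \<bar>G j x - G j y\<bar> \<le> K * l1_dist i x y"
proof -
  have "\<exists>G L. (\<forall>x\<in>sphere_carrier i. \<bar>G x - f x j\<bar> \<le> e) \<and> L-lipschitz_on (sphere_carrier i) G" for j
  proof -
    have "continuous_on (sphere_carrier i) (\<lambda>x. f x j)"
      using f by (simp add: continuous_map_in_subtopology continuous_map_componentwise_UNIV
          nsphere_eq_top_of_set)
    then have "uniformly_continuous_on (sphere_carrier i) (\<lambda>x. f x j)"
      by (intro compact_uniformly_continuous compact_sphere_carrier)
    then obtain \<delta> where "0 < \<delta>" and \<delta>: "\<And>x y. x \<in> sphere_carrier i \<Longrightarrow> y \<in> sphere_carrier i \<Longrightarrow>
        dist x y < \<delta> \<Longrightarrow> \<bar>f x j - f y j\<bar> < e"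
      using \<open>0 < e\<close> unfolding uniformly_continuous_on_def dist_real_def by (metis dist_commute)
    have "f x \<in> std_simplex n" if "x \<in> sphere_carrier i" for x
      using f that by (auto simp: continuous_map_in_subtopology nsphere_eq_top_of_set)
    then have "0 \<le> f x j \<and> f x j \<le> 1" if "x \<in> sphere_carrier i" for x
      using that by (simp add: std_simplex_def)
    then obtain G where "\<And>x. x \<in> sphere_carrier i \<Longrightarrow> \<bar>G x - f x j\<bar> \<le> e"
      and "(1/\<delta>)-lipschitz_on (sphere_carrier i) G"
      using lipschitz_approximation[of "sphere_carrier i" "\<lambda>x. f x j" \<delta> e]
        sphere_carrier_nonempty \<open>0 < \<delta>\<close> \<open>0 < e\<close> \<delta> by blast
    then show ?thesis by blast
  qed
  then obtain G L where close: "\<And>j x. x \<in> sphere_carrier i \<Longrightarrow> \<bar>G j x - f x j\<bar> \<le> e"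
    and lip: "\<And>j. (L j)-lipschitz_on (sphere_carrier i) (G j)"
    by metis
  define K where "K = 2 * (\<Sum>j\<le>n. L j)"
  have L0: "0 \<le> L j" for j using lip by (rule lipschitz_on_nonneg)
  then have "0 \<le> K" unfolding K_def by (simp add: sum_nonneg)
  have LK: "2 * L j \<le> K" if "j \<le> n" for j
    unfolding K_def using that L0 by (simp add: member_le_sum)
  have "\<bar>G j x - G j y\<bar> \<le> K * l1_dist i x y"
    if "j \<le> n" "x \<in> sphere_carrier i" "y \<in> sphere_carrier i" for j x y
  proof -
    have "\<bar>G j x - G j y\<bar> \<le> L j * dist x y"
      using lipschitz_onD[OF lip that(2,3)] by (simp add: dist_real_def)
    also have "\<dots> \<le> L j * (2 * l1_dist i x y)"
      using dist_le_l1_dist[OF that(2,3)] L0[of j] by (rule mult_left_mono)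
    also have "\<dots> \<le> K * l1_dist i x y"
      using LK[OF \<open>j \<le> n\<close>] abs_coord_diff_le_l1_dist[OF that(2,3), of 0]
      by (simp add: mult_right_mono flip: mult.assoc)
    finally show ?thesis .
  qed
  moreover have "continuous_map (nsphere i) euclideanreal (G j)" for j
    using lipschitz_on_continuous_on[OF lip] by (simp add: nsphere_eq_top_of_set)
  ultimately show thesis using that close \<open>0 \<le> K\<close> by blast
qed

section \<open>Lipschitz images of low-dimensional spheres miss points\<close>

definition abs_argmax :: "nat \<Rightarrow> (nat \<Rightarrow> real) \<Rightarrow> nat" where
  "abs_argmax i x = (SOME k. k \<le> i \<and> (\<forall>j\<le>i. \<bar>x j\<bar> \<le> \<bar>x k\<bar>))"

definition skip_index :: "nat \<Rightarrow> nat \<Rightarrow> nat" where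
  "skip_index k j = (if j < k then j else Suc j)"

text \<open>A point of the \<open>i\<close>-sphere lies in the graph of a function of the \<open>i\<close> coordinates other
  than its largest one, \<open>k\<close>; the cell of the point records \<open>k\<close>, the sign of its \<open>k\<close>-th coordinate
  and the other coordinates rounded down to multiples of \<open>1/N\<close>. There are only \<open>O(N\<^sup>i)\<close> cells.\<close>

definition sphere_cell :: "nat \<Rightarrow> nat \<Rightarrow> (nat \<Rightarrow> real) \<Rightarrow> nat \<times> bool \<times> int list" where
  "sphere_cell N i x = (let k = abs_argmax i x in
     (k, 0 < x k, map (\<lambda>j. \<lfloor>real N * x (skip_index k j)\<rfloor>) [0..<i]))"

definition sphere_cells :: "nat \<Rightarrow> nat \<Rightarrow> (nat \<times> bool \<times> int list) set" where
  "sphere_cells N i = {..i} \<times> UNIV \<times> {xs. set xs \<subseteq> {-int N..int N} \<and> length xs = i}"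

lemma abs_argmax: "abs_argmax i x \<le> i" "j \<le> i \<Longrightarrow> \<bar>x j\<bar> \<le> \<bar>x (abs_argmax i x)\<bar>"
proof -
  define M where "M = Max ((\<lambda>j. \<bar>x j\<bar>) ` {..i})"
  have "M \<in> (\<lambda>j. \<bar>x j\<bar>) ` {..i}" unfolding M_def by (rule Max_in) auto
  then obtain k where "k \<le> i" "M = \<bar>x k\<bar>" by auto
  moreover have "\<bar>x j\<bar> \<le> M" if "j \<le> i" for j unfolding M_def using that by (intro Max_ge) auto
  ultimately have "\<exists>k. k \<le> i \<and> (\<forall>j\<le>i. \<bar>x j\<bar> \<le> \<bar>x k\<bar>)" by auto
  from someI_ex[OF this] show "abs_argmax i x \<le> i" "j \<le> i \<Longrightarrow> \<bar>x j\<bar> \<le> \<bar>x (abs_argmax i x)\<bar>"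
    unfolding abs_argmax_def by blast+
qed

lemma abs_argmax_large:
  assumes x: "x \<in> sphere_carrier i"
  shows "1 / real (i + 1) \<le> \<bar>x (abs_argmax i x)\<bar>"
proof -
  let ?k = "abs_argmax i x"
  have "1 = (\<Sum>j\<le>i. x j ^ 2)" using x by (simp add: sphere_carrier_def)
  also have "\<dots> \<le> (\<Sum>j\<le>i. x ?k ^ 2)"
    using abs_argmax(2) by (intro sum_mono) (simp add: abs_le_square_iff)
  also have "\<dots> = real (i + 1) * \<bar>x ?k\<bar> * \<bar>x ?k\<bar>" by (simp add: power2_eq_square)
  also have "\<dots> \<le> real (i + 1) * \<bar>x ?k\<bar> * 1"
    using sphere_carrier_abs_coord_le_1[OF x] by (intro mult_left_mono) auto
  finally show ?thesis by (simp add: field_simps)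
qed

lemma finite_sphere_cells: "finite (sphere_cells N i)"
  unfolding sphere_cells_def by (intro finite_cartesian_product finite_lists_length_eq) auto

lemma card_sphere_cells: "card (sphere_cells N i) = (i + 1) * 2 * (2 * N + 1) ^ i"
proof -
  have "card {xs. set xs \<subseteq> {-int N..int N} \<and> length xs = i} = (2 * N + 1) ^ i"
    by (subst card_lists_length_eq) (auto simp: nat_add_distrib nat_mult_distrib)
  then show ?thesis unfolding sphere_cells_def by (simp add: card_cartesian_product)
qed

lemma sphere_cell_in_sphere_cells:
  assumes "x \<in> sphere_carrier i"
  shows "sphere_cell N i x \<in> sphere_cells N i"
proof -
  have "\<lfloor>real N * r\<rfloor> \<in> {-int N..int N}" if "\<bar>r\<bar> \<le> 1" for r
  proof -
    have "- real N \<le> real N * r" "real N * r \<le> real N"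
      using that mult_left_mono[of r 1 "real N"] mult_left_mono[of "-1" r "real N"]
      by (auto simp: abs_le_iff)
    then show ?thesis by (simp add: le_floor_iff floor_le_iff)
  qed
  then show ?thesis
    using abs_argmax(1) sphere_carrier_abs_coord_le_1[OF assms]
    unfolding sphere_cell_def sphere_cells_def Let_def by auto
qed

lemma floor_eq_imp_dist_le:
  assumes "\<lfloor>real N * a\<rfloor> = \<lfloor>real N * b\<rfloor>" and "0 < N"
  shows "\<bar>a - b\<bar> \<le> 1 / real N"
proof -
  have "\<bar>real N * a - real N * b\<bar> < 1"
    using assms(1) floor_correct[of "real N * a"] floor_correct[of "real N * b"]
    unfolding abs_less_iff by linarith
  then have "real N * \<bar>a - b\<bar> \<le> 1" by (simp add: abs_mult flip: right_diff_distrib)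
  then show ?thesis using assms(2) by (simp add: field_simps)
qed

lemma sphere_large_coord_close:
  assumes x: "x \<in> sphere_carrier i" and y: "y \<in> sphere_carrier i" and "k \<le> i"
    and close: "\<And>j. j \<le> i \<Longrightarrow> j \<noteq> k \<Longrightarrow> \<bar>x j - y j\<bar> \<le> \<epsilon>"
    and sign: "0 < x k \<longleftrightarrow> 0 < y k"
    and large: "1 / real (i + 1) \<le> \<bar>x k\<bar>" "1 / real (i + 1) \<le> \<bar>y k\<bar>"
  shows "\<bar>x k - y k\<bar> \<le> real i * real (i + 1) * \<epsilon>"
proof -
  define R where "R = {..i} - {k}"
  have R: "finite R" "card R = i" using \<open>k \<le> i\<close> unfolding R_def by auto
  have split: "(\<Sum>j\<le>i. h j) = h k + (\<Sum>j\<in>R. h j)" for h :: "nat \<Rightarrow> real"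
    using sum.remove[of "{..i}" k h] \<open>k \<le> i\<close> unfolding R_def by simp
  have "x k ^ 2 - y k ^ 2 = (\<Sum>j\<in>R. y j ^ 2) - (\<Sum>j\<in>R. x j ^ 2)"
    using x y split[of "\<lambda>j. x j ^ 2"] split[of "\<lambda>j. y j ^ 2"] by (simp add: sphere_carrier_def)
  also have "\<dots> = (\<Sum>j\<in>R. (y j - x j) * (y j + x j))"
    by (simp add: sum_subtractf[symmetric] power2_eq_square algebra_simps)
  finally have "\<bar>x k ^ 2 - y k ^ 2\<bar> \<le> (\<Sum>j\<in>R. \<bar>y j - x j\<bar> * \<bar>y j + x j\<bar>)"
    unfolding abs_mult[symmetric] by (simp only: sum_abs)
  also have "\<dots> \<le> (\<Sum>j\<in>R. \<epsilon> * 2)"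
  proof (intro sum_mono mult_mono)
    fix j assume "j \<in> R"
    then show "\<bar>y j - x j\<bar> \<le> \<epsilon>" using close[of j] by (auto simp: R_def abs_minus_commute)
    show "\<bar>y j + x j\<bar> \<le> 2"
      using sphere_carrier_abs_coord_le_1[OF x, of j] sphere_carrier_abs_coord_le_1[OF y, of j]
      by linarith
  qed (auto simp: R_def intro: order_trans[OF abs_ge_zero close])
  finally have sq: "\<bar>x k ^ 2 - y k ^ 2\<bar> \<le> 2 * real i * \<epsilon>" using R by simp
  have pos: "0 < 1 / real (i + 1)" by simp
  have "\<bar>x k + y k\<bar> = \<bar>x k\<bar> + \<bar>y k\<bar>"
    using sign large pos by (cases "0 < x k") auto
  then have "\<bar>x k - y k\<bar> * (2 / real (i + 1)) \<le> \<bar>x k - y k\<bar> * \<bar>x k + y k\<bar>"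
    using large by (intro mult_left_mono) auto
  also have "\<dots> = \<bar>x k ^ 2 - y k ^ 2\<bar>"
    by (simp add: power2_eq_square algebra_simps flip: abs_mult)
  finally have "\<bar>x k - y k\<bar> * (2 / real (i + 1)) * (real (i + 1) / 2)
      \<le> 2 * real i * \<epsilon> * (real (i + 1) / 2)"
    using sq by (intro mult_right_mono) auto
  moreover have "\<bar>x k - y k\<bar> * (2 / real (i + 1)) * (real (i + 1) / 2) = \<bar>x k - y k\<bar>"
    by simp
  moreover have "2 * real i * \<epsilon> * (real (i + 1) / 2) = real i * real (i + 1) * \<epsilon>"
    by simp
  ultimately show ?thesis by (simp only:)
qed

lemma sphere_cell_l1_diameter:
  assumes x: "x \<in> sphere_carrier i" and y: "y \<in> sphere_carrier i" and "0 < N"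
    and eq: "sphere_cell N i x = sphere_cell N i y"
  shows "l1_dist i x y \<le> real ((i + 1) ^ 2) / real N"
proof -
  define k where "k = abs_argmax i x"
  have ky: "abs_argmax i y = k" using eq by (simp add: sphere_cell_def k_def Let_def)
  have sign: "0 < x k \<longleftrightarrow> 0 < y k"
    and fl: "map (\<lambda>j. \<lfloor>real N * x (skip_index k j)\<rfloor>) [0..<i]
           = map (\<lambda>j. \<lfloor>real N * y (skip_index k j)\<rfloor>) [0..<i]"
    using eq unfolding sphere_cell_def Let_def k_def[symmetric] ky by simp_all
  have "k \<le> i" using abs_argmax(1) k_def by simp
  have close: "\<bar>x j - y j\<bar> \<le> 1 / real N" if "j \<le> i" "j \<noteq> k" for j
  proof -
    define j' where "j' = (if j < k then j else j - 1)"
    have "j' < i" "skip_index k j' = j"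
      using that \<open>k \<le> i\<close> unfolding j'_def skip_index_def by auto
    then show ?thesis
      using fl \<open>0 < N\<close> by (intro floor_eq_imp_dist_le) (auto simp: map_eq_conv)
  qed
  have large: "\<bar>x k - y k\<bar> \<le> real i * real (i + 1) * (1 / real N)"
    using abs_argmax_large[OF x] abs_argmax_large[OF y]
    by (intro sphere_large_coord_close[OF x y \<open>k \<le> i\<close> close sign]) (simp_all add: k_def ky)
  have "l1_dist i x y = \<bar>x k - y k\<bar> + (\<Sum>j\<in>{..i} - {k}. \<bar>x j - y j\<bar>)"
    unfolding l1_dist_def using \<open>k \<le> i\<close> by (simp add: sum.remove)
  also have "\<dots> \<le> real i * real (i + 1) * (1 / real N) + (\<Sum>j\<in>{..i} - {k}. 1 / real N)"
    using large close by (intro add_mono sum_mono) auto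
  also have "\<dots> = (real i * real (i + 1) + real i) / real N"
    using \<open>k \<le> i\<close> by (simp add: add_divide_distrib)
  also have "\<dots> \<le> real ((i + 1) ^ 2) / real N"
    by (intro divide_right_mono) (auto simp: power2_eq_square algebra_simps)
  finally show ?thesis .
qed

text \<open>A grid of \<open>(N + 1)\<^sup>n\<^sup>-\<^sup>1\<close> points in the facet \<open>x 0 = 0\<close> of the boundary, with
  spacing \<open>1/(2nN)\<close> in each of the coordinates \<open>1, \<dots>, n - 1\<close>; these lie in \<open>[1/(2n), 1/n]\<close>,
  so the last coordinate, which makes the sum \<open>1\<close>, is nonnegative.\<close>

definition grid_coord :: "nat \<Rightarrow> nat \<Rightarrow> nat list \<Rightarrow> nat \<Rightarrow> real" where
  "grid_coord n N a l = (1 + real (a ! l) / real N) / (2 * real n)"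

definition grid_point :: "nat \<Rightarrow> nat \<Rightarrow> nat list \<Rightarrow> nat \<Rightarrow> real" where
  "grid_point n N a = (\<lambda>j. if 1 \<le> j \<and> j < n then grid_coord n N a (j - 1)
                         else if j = n then 1 - (\<Sum>l<n - 1. grid_coord n N a l) else 0)"

definition grid_indices :: "nat \<Rightarrow> nat \<Rightarrow> nat list set" where
  "grid_indices n N = {a. set a \<subseteq> {0..N} \<and> length a = n - 1}"

lemma finite_grid_indices: "finite (grid_indices n N)"
  unfolding grid_indices_def by (intro finite_lists_length_eq) auto

lemma card_grid_indices: "card (grid_indices n N) = (N + 1) ^ (n - 1)"
  unfolding grid_indices_def by (subst card_lists_length_eq) auto

lemma grid_coord_bounds:
  assumes "a \<in> grid_indices n N" "l < n - 1" "0 < N"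
  shows "0 \<le> grid_coord n N a l" "grid_coord n N a l \<le> 1 / real n"
proof -
  have "a ! l \<in> set a" using assms(1,2) by (simp add: grid_indices_def)
  then have "a ! l \<le> N" using assms(1) by (auto simp: grid_indices_def)
  then have "1 + real (a ! l) / real N \<le> 2" using \<open>0 < N\<close> by simp
  then have "(1 + real (a ! l) / real N) / (2 * real n) \<le> 2 / (2 * real n)"
    by (intro divide_right_mono) auto
  then show "grid_coord n N a l \<le> 1 / real n" unfolding grid_coord_def by simp
qed (simp add: grid_coord_def)

lemma grid_point_in_boundary:
  assumes a: "a \<in> grid_indices n N" and "0 < N" and "2 \<le> n"
  shows "grid_point n N a \<in> simplex_boundary n"
proof -
  define U where "U = (\<Sum>l<n - 1. grid_coord n N a l)"
  have "0 \<le> U" unfolding U_def using grid_coord_bounds[OF a _ \<open>0 < N\<close>] by (intro sum_nonneg) auto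
  have "U \<le> (\<Sum>l<n - 1. 1 / real n)"
    unfolding U_def using grid_coord_bounds[OF a _ \<open>0 < N\<close>] by (intro sum_mono) auto
  also have "\<dots> \<le> 1" using \<open>2 \<le> n\<close> by simp
  finally have "U \<le> 1" .
  have "1 / real n \<le> 1" using \<open>2 \<le> n\<close> by simp
  then have "0 \<le> grid_coord n N a l \<and> grid_coord n N a l \<le> 1" if "l < n - 1" for l
    using grid_coord_bounds[OF a that \<open>0 < N\<close>] by linarith
  then have bounds: "0 \<le> grid_point n N a j \<and> grid_point n N a j \<le> 1" for j
    using \<open>0 \<le> U\<close> \<open>U \<le> 1\<close> unfolding grid_point_def U_def[symmetric] by auto
  obtain m where m: "n = Suc m" using \<open>2 \<le> n\<close> by (cases n) auto
  have "(\<Sum>j\<le>n. grid_point n N a j) = (\<Sum>j<n. grid_point n N a j) + grid_point n N a n"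
    by (simp add: lessThan_Suc_atMost[symmetric])
  also have "(\<Sum>j<n. grid_point n N a j) = grid_point n N a 0 + (\<Sum>l<m. grid_point n N a (Suc l))"
    unfolding m by (rule sum.lessThan_Suc_shift)
  also have "(\<Sum>l<m. grid_point n N a (Suc l)) = U"
    unfolding U_def m by (intro sum.cong) (auto simp: grid_point_def)
  finally have "(\<Sum>j\<le>n. grid_point n N a j) = 1"
    using \<open>2 \<le> n\<close> by (simp add: grid_point_def U_def)
  moreover have "\<forall>j>n. grid_point n N a j = 0" by (simp add: grid_point_def)
  ultimately have "grid_point n N a \<in> std_simplex n"
    using bounds by (simp add: std_simplex_def)
  moreover have "grid_point n N a 0 = 0" using \<open>2 \<le> n\<close> by (simp add: grid_point_def)
  ultimately show ?thesis unfolding facet_union_def by force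
qed

lemma grid_index_diff:
  assumes "l < n - 1" "0 < N"
  shows "\<bar>real (a ! l) - real (b ! l)\<bar>
           = 2 * real n * real N * \<bar>grid_point n N a (Suc l) - grid_point n N b (Suc l)\<bar>"
proof -
  have "Suc l < n" using assms(1) by linarith
  then have "grid_point n N a (Suc l) - grid_point n N b (Suc l)
          = (real (a ! l) - real (b ! l)) / (2 * real n * real N)"
    using assms by (simp add: grid_point_def grid_coord_def field_simps)
  then show ?thesis using assms by (simp add: abs_divide)
qed

lemma card_grid_indices_near:
  assumes "a \<in> grid_indices n N"
  shows "card {b \<in> grid_indices n N. \<forall>l<n - 1. \<bar>real (b ! l) - real (a ! l)\<bar> \<le> real R}
           \<le> (2 * R + 1) ^ (n - 1)"
proof -
  let ?T = "{b \<in> grid_indices n N. \<forall>l<n - 1. \<bar>real (b ! l) - real (a ! l)\<bar> \<le> real R}"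
  define shift where "shift b = map (\<lambda>l. b ! l + R - a ! l) [0..<n - 1]" for b
  have inj: "inj_on shift ?T"
  proof (rule inj_onI)
    fix b b' assume b: "b \<in> ?T" "b' \<in> ?T" and eq: "shift b = shift b'"
    have "b ! l = b' ! l" if "l < n - 1" for l
    proof -
      have "b ! l + R - a ! l = b' ! l + R - a ! l"
        using eq that by (simp add: shift_def map_eq_conv)
      moreover have "a ! l \<le> b ! l + R" "a ! l \<le> b' ! l + R"
        using b that by (auto simp: abs_le_iff)
      ultimately show ?thesis by arith
    qed
    then show "b = b'"
      using b by (intro nth_equalityI) (auto simp: grid_indices_def)
  qed
  have sub: "shift ` ?T \<subseteq> {xs. set xs \<subseteq> {0..2 * R} \<and> length xs = n - 1}"
  proof -
    have "b ! l + R - a ! l \<le> 2 * R" if "b \<in> ?T" "l < n - 1" for b l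
    proof -
      have "real (b ! l) \<le> real (a ! l) + real R" using that by (auto simp: abs_le_iff)
      then show ?thesis by linarith
    qed
    then show ?thesis by (auto simp: shift_def)
  qed
  have "card ?T = card (shift ` ?T)" using inj by (simp add: card_image)
  also have "\<dots> \<le> card {xs. set xs \<subseteq> {0..2 * R} \<and> length xs = n - 1}"
    by (intro card_mono sub finite_lists_length_eq) auto
  also have "\<dots> = (2 * R + 1) ^ (n - 1)" by (subst card_lists_length_eq) auto
  finally show ?thesis .
qed

lemma grid_counting_inequality:
  fixes N B i m :: nat
  assumes N: "N = 2 * (i + 1) * 2 ^ i * B" and "1 \<le> B" and "i + 1 \<le> m"
  shows "B * ((i + 1) * 2 * (2 * N + 1) ^ i) < (N + 1) ^ m"
proof -
  have "(2 * N + 1) ^ i \<le> (2 * (N + 1)) ^ i" by (intro power_mono) auto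
  also have "\<dots> = 2 ^ i * (N + 1) ^ i" by (rule power_mult_distrib)
  finally have "B * ((i + 1) * 2 * (2 * N + 1) ^ i) \<le> B * ((i + 1) * 2 * (2 ^ i * (N + 1) ^ i))"
    by (intro mult_left_mono) auto
  also have "\<dots> = N * (N + 1) ^ i" unfolding N by (simp add: algebra_simps)
  also have "\<dots> < (N + 1) ^ (i + 1)" using \<open>1 \<le> B\<close> by simp
  also have "\<dots> \<le> (N + 1) ^ m" using \<open>i + 1 \<le> m\<close> by (intro power_increasing) auto
  finally show ?thesis .
qed

lemma same_cell_grid_indices_close:
  assumes lip: "\<And>x y j. x \<in> sphere_carrier i \<Longrightarrow> y \<in> sphere_carrier i \<Longrightarrow>
                  \<bar>\<Phi> x j - \<Phi> y j\<bar> \<le> K * l1_dist i x y"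
    and "0 \<le> K" and "0 < N" and x: "x \<in> sphere_carrier i" and y: "y \<in> sphere_carrier i"
    and cell: "sphere_cell N i x = sphere_cell N i y"
    and "\<Phi> x = grid_point n N a" and "\<Phi> y = grid_point n N b" and "l < n - 1"
  shows "\<bar>real (a ! l) - real (b ! l)\<bar> \<le> 2 * real n * K * real ((i + 1) ^ 2)"
proof -
  have "\<bar>real (a ! l) - real (b ! l)\<bar>
          = 2 * real n * real N * \<bar>grid_point n N a (Suc l) - grid_point n N b (Suc l)\<bar>"
    using \<open>l < n - 1\<close> \<open>0 < N\<close> by (rule grid_index_diff)
  also have "\<dots> \<le> 2 * real n * real N * (K * l1_dist i x y)"
    using lip[OF x y, of "Suc l"] assms(7,8) by (intro mult_left_mono) simp_all
  also have "\<dots> \<le> 2 * real n * real N * (K * (real ((i + 1) ^ 2) / real N))"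
    using sphere_cell_l1_diameter[OF x y \<open>0 < N\<close> cell] \<open>0 \<le> K\<close>
    by (intro mult_left_mono) simp_all
  also have "\<dots> = 2 * real n * K * real ((i + 1) ^ 2)" using \<open>0 < N\<close> by simp
  finally show ?thesis .
qed

lemma card_cell_fiber_le:
  assumes lip: "\<And>x y j. x \<in> sphere_carrier i \<Longrightarrow> y \<in> sphere_carrier i \<Longrightarrow>
                  \<bar>\<Phi> x j - \<Phi> y j\<bar> \<le> K * l1_dist i x y"
    and "0 \<le> K" and "0 < N"
    and pick: "\<forall>a\<in>grid_indices n N. pick a \<in> sphere_carrier i \<and> \<Phi> (pick a) = grid_point n N a"
  shows "card {a \<in> grid_indices n N. sphere_cell N i (pick a) = c}
           \<le> (2 * nat \<lceil>2 * real n * K * real ((i + 1) ^ 2)\<rceil> + 1) ^ (n - 1)"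
proof (cases "{a \<in> grid_indices n N. sphere_cell N i (pick a) = c} = {}")
  case False
  define R :: nat where "R = nat \<lceil>2 * real n * K * real ((i + 1) ^ 2)\<rceil>"
  from False obtain a0 where a0: "a0 \<in> grid_indices n N" "sphere_cell N i (pick a0) = c" by blast
  have "{a \<in> grid_indices n N. sphere_cell N i (pick a) = c}
      \<subseteq> {b \<in> grid_indices n N. \<forall>l<n - 1. \<bar>real (b ! l) - real (a0 ! l)\<bar> \<le> real R}"
  proof (intro subsetI CollectI conjI allI impI)
    fix b assume b: "b \<in> {a \<in> grid_indices n N. sphere_cell N i (pick a) = c}"
    then show "b \<in> grid_indices n N" by simp
    fix l assume "l < n - 1"
    have cell: "sphere_cell N i (pick b) = sphere_cell N i (pick a0)"
      using b a0 by simp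
    have pb: "pick b \<in> sphere_carrier i" "\<Phi> (pick b) = grid_point n N b"
      and pa: "pick a0 \<in> sphere_carrier i" "\<Phi> (pick a0) = grid_point n N a0"
      using pick b a0 by auto
    have "\<bar>real (b ! l) - real (a0 ! l)\<bar> \<le> 2 * real n * K * real ((i + 1) ^ 2)"
      by (rule same_cell_grid_indices_close[OF lip \<open>0 \<le> K\<close> \<open>0 < N\<close> pb(1) pa(1) cell
            pb(2) pa(2) \<open>l < n - 1\<close>])
    also have "\<dots> \<le> real R" unfolding R_def by (rule real_nat_ceiling_ge)
    finally show "\<bar>real (b ! l) - real (a0 ! l)\<bar> \<le> real R" .
  qed
  then have "card {a \<in> grid_indices n N. sphere_cell N i (pick a) = c}
      \<le> card {b \<in> grid_indices n N. \<forall>l<n - 1. \<bar>real (b ! l) - real (a0 ! l)\<bar> \<le> real R}"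
    by (intro card_mono) (simp_all add: finite_grid_indices)
  also have "\<dots> \<le> (2 * R + 1) ^ (n - 1)" by (rule card_grid_indices_near[OF a0(1)])
  finally show ?thesis unfolding R_def .
next
  case True
  then show ?thesis by (simp only: True card.empty zero_le)
qed

text \<open>A Lipschitz map from the \<open>i\<close>-sphere cannot hit all \<open>(N + 1)\<^sup>n\<^sup>-\<^sup>1\<close> grid points when
  \<open>i < n - 1\<close> and \<open>N\<close> is large: each of the \<open>O(N\<^sup>i)\<close> cells of the sphere is mapped onto a set
  of diameter \<open>O(1/N)\<close>, which contains a bounded number of grid points.\<close>

lemma lipschitz_map_misses_boundary_point:
  assumes "i + 2 \<le> n" and "0 \<le> K"
    and lip: "\<And>x y j. x \<in> sphere_carrier i \<Longrightarrow> y \<in> sphere_carrier i \<Longrightarrow>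
                \<bar>\<Phi> x j - \<Phi> y j\<bar> \<le> K * l1_dist i x y"
  obtains q where "q \<in> simplex_boundary n" and "\<And>x. x \<in> sphere_carrier i \<Longrightarrow> \<Phi> x \<noteq> q"
proof -
  define B :: nat where "B = (2 * nat \<lceil>2 * real n * K * real ((i + 1) ^ 2)\<rceil> + 1) ^ (n - 1)"
  define N :: nat where "N = 2 * (i + 1) * 2 ^ i * B"
  have "1 \<le> B" and "0 < N" unfolding N_def B_def by simp_all
  have "\<exists>q\<in>simplex_boundary n. \<forall>x\<in>sphere_carrier i. \<Phi> x \<noteq> q"
  proof (rule ccontr)
    assume "\<not> ?thesis"
    then have "\<forall>a\<in>grid_indices n N. \<exists>x. x \<in> sphere_carrier i \<and> \<Phi> x = grid_point n N a"
      using grid_point_in_boundary[OF _ \<open>0 < N\<close>] \<open>i + 2 \<le> n\<close> by fastforce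
    from bchoice[OF this] obtain pick where pick: "\<forall>a\<in>grid_indices n N.
        pick a \<in> sphere_carrier i \<and> \<Phi> (pick a) = grid_point n N a"
      by blast
    define h where "h a = sphere_cell N i (pick a)" for a
    have "h \<in> grid_indices n N \<rightarrow> sphere_cells N i"
      using pick sphere_cell_in_sphere_cells by (auto simp: h_def)
    moreover have "sphere_cells N i \<noteq> {}"
      using sphere_cell_in_sphere_cells sphere_carrier_nonempty by blast
    ultimately obtain c where "card (grid_indices n N)
        \<le> card (h -` {c} \<inter> grid_indices n N) * card (sphere_cells N i)"
      using pigeonhole_card[OF _ finite_grid_indices finite_sphere_cells] by blast
    also have "h -` {c} \<inter> grid_indices n N = {a \<in> grid_indices n N. sphere_cell N i (pick a) = c}"
      by (auto simp: h_def)
    also have "card \<dots> * card (sphere_cells N i) \<le> B * card (sphere_cells N i)"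
      unfolding B_def by (intro mult_right_mono card_cell_fiber_le[OF lip \<open>0 \<le> K\<close> \<open>0 < N\<close> pick])
        simp_all
    finally have "(N + 1) ^ (n - 1) \<le> B * ((i + 1) * 2 * (2 * N + 1) ^ i)"
      by (simp only: card_grid_indices card_sphere_cells)
    moreover have "B * ((i + 1) * 2 * (2 * N + 1) ^ i) < (N + 1) ^ (n - 1)"
      using N_def \<open>1 \<le> B\<close> \<open>i + 2 \<le> n\<close> by (intro grid_counting_inequality) auto
    ultimately show False by linarith
  qed
  then show thesis using that by blast
qed

section \<open>Connectivity of the unions of mirrors\<close>

lemma nullhomotopic_if_approximation_misses:
  assumes f: "continuous_map Y (subtopology (powertop_real UNIV) (simplex_boundary n)) f"
    and G: "\<And>k. continuous_map Y euclideanreal (\<lambda>y. G y k)"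
    and close: "\<And>y k. y \<in> topspace Y \<Longrightarrow> k \<le> n \<Longrightarrow> \<bar>G y k - f y k\<bar> \<le> 1 / (4 * (real n + 1))"
    and q: "q \<in> simplex_boundary n" and miss: "\<And>y. y \<in> topspace Y \<Longrightarrow> boundary_proj n (G y) \<noteq> q"
  shows "homotopic_with (\<lambda>_. True) Y (subtopology (powertop_real UNIV) (simplex_boundary n))
           f (\<lambda>_. boundary_proj n (\<lambda>k. - q k))"
proof -
  let ?B = "subtopology (powertop_real UNIV) (simplex_boundary n)"
  have fk: "continuous_map Y euclideanreal (\<lambda>y. f y k)" for k
    using f by (simp add: continuous_map_in_subtopology continuous_map_componentwise_UNIV)
  have fB: "f y \<in> simplex_boundary n" if "y \<in> topspace Y" for y
    using f that by (auto simp: continuous_map_in_subtopology)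
  have near: "1 / (2 * (real n + 1)) \<le> coord_spread n (\<lambda>k. (1 - t) * f y k + t * G y k)"
    if y: "y \<in> topspace Y" and t: "0 \<le> t" "t \<le> 1" for y t
  proof (rule coord_spread_near_boundary[OF fB[OF y]])
    fix k assume "k \<le> n"
    have "(1 - t) * f y k + t * G y k - f y k = t * (G y k - f y k)"
      by (simp add: algebra_simps)
    then have "\<bar>(1 - t) * f y k + t * G y k - f y k\<bar> = t * \<bar>G y k - f y k\<bar>"
      using t by (simp add: abs_mult)
    also have "\<dots> \<le> 1 * (1 / (4 * (real n + 1)))"
      using t close[OF y \<open>k \<le> n\<close>] by (intro mult_mono) auto
    finally show "\<bar>(1 - t) * f y k + t * G y k - f y k\<bar> \<le> 1 / (4 * (real n + 1))" by simp
  qed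
  have pos: "0 < 1 / (2 * (real n + 1))" by simp
  have "homotopic_with (\<lambda>_. True) Y ?B (\<lambda>y. boundary_proj n (f y)) (\<lambda>y. boundary_proj n (G y))"
    using near pos by (intro homotopic_boundary_proj_straight fk G) (meson less_le_trans)
  then have h1: "homotopic_with (\<lambda>_. True) Y ?B f (\<lambda>y. boundary_proj n (G y))"
    by (rule homotopic_with_eq) (simp_all add: boundary_proj_fixes_boundary fB)
  have "0 < coord_spread n (G y)" if "y \<in> topspace Y" for y
  proof -
    have "1 / (2 * (real n + 1)) \<le> coord_spread n (G y)" using near[OF that, of 1] by simp
    then show ?thesis using pos by linarith
  qed
  then have h2: "homotopic_with (\<lambda>_. True) Y ?B (\<lambda>y. boundary_proj n (G y))
                   (\<lambda>_. boundary_proj n (\<lambda>k. - q k))"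
    using q miss
    by (intro homotopic_boundary_proj_straight[where g = "\<lambda>_ k. - q k", OF G]
        coord_spread_segment_to_antipode) auto
  show ?thesis using homotopic_with_trans[OF h1 h2] .
qed

lemma nsphere_map_simplex_boundary_nullhomotopic:
  assumes "i + 2 \<le> n"
    and f: "continuous_map (nsphere i) (subtopology (powertop_real UNIV) (simplex_boundary n)) f"
  shows "\<exists>c\<in>simplex_boundary n.
           homotopic_with (\<lambda>_. True) (nsphere i) (subtopology (powertop_real UNIV) (simplex_boundary n))
             f (\<lambda>_. c)"
proof -
  define \<epsilon> where "\<epsilon> = 1 / (4 * (real n + 1))"
  define \<kappa> where "\<kappa> = 1 / (2 * (real n + 1))"
  have f_simplex: "continuous_map (nsphere i) (subtopology (powertop_real UNIV) (std_simplex n)) f"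
    using f by (auto simp: continuous_map_in_subtopology facet_union_def)
  have "0 < \<epsilon>" by (simp add: \<epsilon>_def)
  obtain G K where close: "\<And>j x. x \<in> sphere_carrier i \<Longrightarrow> \<bar>G j x - f x j\<bar> \<le> \<epsilon>"
    and G: "\<And>j. continuous_map (nsphere i) euclideanreal (G j)" and "0 \<le> K"
    and G_lip: "\<And>j x y. j \<le> n \<Longrightarrow> x \<in> sphere_carrier i \<Longrightarrow> y \<in> sphere_carrier i \<Longrightarrow>
                  \<bar>G j x - G j y\<bar> \<le> K * l1_dist i x y"
    using nsphere_map_lipschitz_approximation[OF f_simplex \<open>0 < \<epsilon>\<close>] by blast
  have "f x \<in> simplex_boundary n" if "x \<in> sphere_carrier i" for x
    using f that by (auto simp: continuous_map_in_subtopology nsphere_eq_top_of_set)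
  then have spread: "\<kappa> \<le> coord_spread n (\<lambda>j. G j x)" if "x \<in> sphere_carrier i" for x
    unfolding \<kappa>_def using close[OF that] that
    by (intro coord_spread_near_boundary) (simp_all add: \<epsilon>_def)
  define \<Phi> where "\<Phi> x = boundary_proj n (\<lambda>j. G j x)" for x
  have "0 < \<kappa>" by (simp add: \<kappa>_def)
  have "\<bar>\<Phi> x j - \<Phi> y j\<bar> \<le> ((2 * real n + 4) * K / \<kappa>) * l1_dist i x y"
    if "x \<in> sphere_carrier i" "y \<in> sphere_carrier i" for x y j
  proof -
    have "\<bar>\<Phi> x j - \<Phi> y j\<bar> \<le> (2 * real n + 4) * (K * l1_dist i x y) / \<kappa>"
      unfolding \<Phi>_def using G_lip[OF _ that] spread[OF that(1)] spread[OF that(2)] \<open>0 < \<kappa>\<close>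
      by (intro boundary_proj_diff_le) auto
    also have "\<dots> = ((2 * real n + 4) * K / \<kappa>) * l1_dist i x y" by (simp add: mult_ac)
    finally show ?thesis .
  qed
  moreover have "0 \<le> (2 * real n + 4) * K / \<kappa>" using \<open>0 \<le> K\<close> \<open>0 < \<kappa>\<close> by simp
  ultimately obtain q where q: "q \<in> simplex_boundary n"
    and miss: "\<And>x. x \<in> sphere_carrier i \<Longrightarrow> \<Phi> x \<noteq> q"
    using lipschitz_map_misses_boundary_point[OF \<open>i + 2 \<le> n\<close>] by blast
  have "homotopic_with (\<lambda>_. True) (nsphere i) (subtopology (powertop_real UNIV) (simplex_boundary n))
          f (\<lambda>_. boundary_proj n (\<lambda>k. - q k))"
    using close miss q G
    by (intro nullhomotopic_if_approximation_misses[OF f, where G = "\<lambda>x j. G j x"])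
      (auto simp: nsphere_eq_top_of_set \<Phi>_def \<epsilon>_def)
  then show ?thesis using boundary_proj_in_boundary[OF coord_spread_antipode[OF q]] by blast
qed

lemma k_connected_simplex_boundary:
  assumes "1 \<le> n"
  shows "k_connected (int n - 2) (subtopology (powertop_real UNIV) (simplex_boundary n))"
proof -
  have "simplex_vertex 0 \<in> simplex_boundary n"
    using simplex_vertex_in_std_simplex[of 0 n] assms
    by (auto simp: facet_union_def simplex_vertex_def intro!: bexI[of _ 1])
  then show ?thesis
    using nsphere_map_simplex_boundary_nullhomotopic unfolding k_connected_def by fastforce
qed

lemma k_connected_facet_union:
  assumes "1 \<le> n" and "J \<subseteq> {..n}" and "J \<noteq> {}"
  shows "k_connected (int n - 2) (subtopology (powertop_real UNIV) (facet_union n J))"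
proof (cases "J = {..n}")
  case True
  then show ?thesis using k_connected_simplex_boundary[OF \<open>1 \<le> n\<close>] by simp
next
  case False
  then obtain j0 where j0: "j0 \<le> n" "j0 \<notin> J" using assms(2) by auto
  have "simplex_vertex j0 \<in> facet_union n J"
    using simplex_vertex_in_std_simplex[OF j0(1)] j0 \<open>J \<noteq> {}\<close>
    by (auto simp: facet_union_def simplex_vertex_def)
  then show ?thesis using facet_union_star[OF j0] by (intro k_connected_star_shaped)
qed

lemma vtx_index_le:
  assumes "s \<in> Sn V n" and "1 \<le> n"
  shows "vtx_index v1 s \<le> n"
  using assms by (auto simp: Sn_def vtx_index_def)

lemma Union_mirror_eq_facet_union:
  assumes "D \<inter> Sminus1 V m v1 = {}"
  shows "(\<Union>s\<in>D. mirror V m v1 n s) = facet_union n (vtx_index v1 ` D)"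
  using assms by (auto simp: mirror_def facet_union_def)

lemma Union_mirror_eq_std_simplex:
  assumes "s \<in> D" and "s \<in> Sminus1 V m v1"
  shows "(\<Union>s\<in>D. mirror V m v1 n s) = std_simplex n"
  using assms by (auto simp: mirror_def split: if_splits)

theorem lemma7p3:
  fixes V :: "'v set" and m :: "'v \<Rightarrow> 'v \<Rightarrow> enat" and v1 :: 'v
    and n :: nat and w :: "('v + nat) list set"
  assumes "coxeter_diagram V m" and "v1 \<in> V" and "1 \<le> n"
    and "w \<in> cox_group (Sn V n) (gamma_m m v1)"
    and "w \<noteq> cox_unit (Sn V n) (gamma_m m v1)"
  shows "k_connected (int n - 2)
           (subtopology (powertop_real UNIV)
              (\<Union>s\<in>descent_set (Sn V n) (gamma_m m v1) w. mirror V m v1 n s))"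
proof (cases "descent_set (Sn V n) (gamma_m m v1) w \<inter> Sminus1 V m v1 = {}")
  case True
  let ?J = "vtx_index v1 ` descent_set (Sn V n) (gamma_m m v1) w"
  have "?J \<noteq> {}" using descent_set_nonempty[OF assms(4,5)] by simp
  moreover have "?J \<subseteq> {..n}"
    using vtx_index_le[OF _ \<open>1 \<le> n\<close>] unfolding descent_set_def by auto
  ultimately have "k_connected (int n - 2) (subtopology (powertop_real UNIV) (facet_union n ?J))"
    by (intro k_connected_facet_union \<open>1 \<le> n\<close>)
  then show ?thesis by (simp only: Union_mirror_eq_facet_union[OF True])
next
  case False
  then obtain s where s: "s \<in> descent_set (Sn V n) (gamma_m m v1) w" "s \<in> Sminus1 V m v1"
    by blast
  have "k_connected (int n - 2) (subtopology (powertop_real UNIV) (std_simplex n))"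
    by (rule k_connected_star_shaped[OF simplex_vertex_in_std_simplex[of 0 n]])
      (auto intro: std_simplex_segment simplex_vertex_in_std_simplex)
  then show ?thesis by (simp only: Union_mirror_eq_std_simplex[OF s])
qed

end
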